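(* Let $P, A, B, C$ be points in the Euclidean plane, let $r>0$ and let $Z=\{Q:|PQ|\le r\}$. For a point $Q\notin\{A,B,C\}$, consider the three angles around $Q$ formed by consecutive rays among $QA,QB,QC$ in counterclockwise order (these three angles sum to $2\pi$). Let $P^*\in Z$ be a solution of the Max-Min-Angle problem, i.e. a point of $Z$ maximizing, over $Q\in Z$, the smallest of the angles $\angle AQB,\angle BQC,\angle CQA$ (non-reflex angles in $[0,\pi]$). Suppose that at $P^*$ there are exactly two smallest angles, i.e. two of the three consecutive angles around $P^*$ are equal and strictly smaller than the third. Then $P^*$ lies on the boundary circle $\{Q:|PQ|=r\}$ of $Z$.
   Context: Context: $P$ is the position of a degree-three vertex of a graph drawn with straight-line edges, $A,B,C$ the positions of its neighbours, and $r$ the maximum allowed displacement. *)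

theory Defs
  imports Complex_Main
begin

(* Points of the Euclidean plane are modelled as complex numbers. *)

text \<open>Non-reflex angle AQB in [0, pi] between rays QA and QB.
  (Degenerate convention: if Q = A or Q = B the value is 0.)\<close>
definition ang :: "complex \<Rightarrow> complex \<Rightarrow> complex \<Rightarrow> real" where
  "ang A Q B = \<bar>Arg ((B - Q) / (A - Q))\<bar>"

definition ccw_ang :: "complex \<Rightarrow> complex \<Rightarrow> complex \<Rightarrow> real" where
  "ccw_ang Q X Y = (let t = Arg ((Y - Q) / (X - Q)) in if t < 0 then t + 2 * pi else t)"

text \<open>If A, B, C are seen in ccw order
  from Q these are the ccw angles A->B, B->C, C->A; otherwise A->C, C->B, B->A.\<close>
definition consec_angles :: "complex \<Rightarrow> complex \<Rightarrow> complex \<Rightarrow> complex \<Rightarrow> real \<times> real \<times> real" where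
  "consec_angles Q A B C =
     (if ccw_ang Q A B + ccw_ang Q B C + ccw_ang Q C A = 2 * pi
      then (ccw_ang Q A B, ccw_ang Q B C, ccw_ang Q C A)
      else (ccw_ang Q A C, ccw_ang Q C B, ccw_ang Q B A))"

definition exactly_two_smallest :: "real \<times> real \<times> real \<Rightarrow> bool" where
  "exactly_two_smallest t = (case t of (x, y, z) \<Rightarrow>
      (x = y \<and> x < z) \<or> (y = z \<and> y < x) \<or> (x = z \<and> x < y))"

definition min_angle :: "complex \<Rightarrow> complex \<Rightarrow> complex \<Rightarrow> complex \<Rightarrow> real" where
  "min_angle Q A B C = min (ang A Q B) (min (ang B Q C) (ang C Q A))"

end

theory Submission
  imports Defs "HOL-Analysis.Analysis"
begin

text \<open>Suppose the optimum P* were an interior point of the disc. Label the rays so that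
  AQB = BQC = x < CQA at Q = P*. Moving Q a little towards B strictly enlarges the two angles at
  the common ray QB (an exterior angle of a triangle exceeds the interior one), while CQA changes
  continuously and so stays above x. The new point is still in the disc and has a larger
  smallest angle, contradicting optimality.\<close>

lemma ccw_ang_bounds: "0 \<le> ccw_ang Q X Y" "ccw_ang Q X Y < 2 * pi"
  using Arg_bounded[of "(Y - Q) / (X - Q)"] by (auto simp: ccw_ang_def Let_def)

lemma ang_eq_min_ccw_ang: "ang X Q Y = min (ccw_ang Q X Y) (2 * pi - ccw_ang Q X Y)"
  using Arg_bounded[of "(Y - Q) / (X - Q)"] by (auto simp: ccw_ang_def ang_def Let_def)

lemma ccw_ang_commute:
  "ccw_ang Q Y X = (if ccw_ang Q X Y = 0 then 0 else 2 * pi - ccw_ang Q X Y)"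
proof -
  define z where "z = (Y - Q) / (X - Q)"
  have "(X - Q) / (Y - Q) = inverse z" by (simp add: z_def)
  moreover have "z \<in> \<real> \<longleftrightarrow> Arg z = 0 \<or> Arg z = pi" using Arg_eq_0_pi by blast
  ultimately show ?thesis
    using Arg_bounded[of z] by (auto simp: ccw_ang_def Let_def Arg_inverse simp flip: z_def)
qed

lemma ang_commute: "ang X Q Y = ang Y Q X"
  unfolding ang_eq_min_ccw_ang using ccw_ang_commute[of Q Y X] ccw_ang_bounds[of Q X Y] by auto

lemma cis_ccw_ang: "Q \<noteq> X \<Longrightarrow> Q \<noteq> Y \<Longrightarrow> cis (ccw_ang Q X Y) = sgn ((Y - Q) / (X - Q))"
  by (auto simp: ccw_ang_def Let_def cis_Arg simp flip: cis_mult)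

lemma ccw_ang_sum_cases:
  assumes "Q \<notin> {A, B, C}"
  shows "ccw_ang Q A B + ccw_ang Q B C + ccw_ang Q C A \<in> {0, 2 * pi, 4 * pi}"
proof -
  define S where "S = ccw_ang Q A B + ccw_ang Q B C + ccw_ang Q C A"
  have "cis S = sgn ((B - Q) / (A - Q) * ((C - Q) / (B - Q)) * ((A - Q) / (C - Q)))"
    using assms unfolding S_def sgn_mult by (simp add: cis_ccw_ang flip: cis_mult del: sgn_divide)
  also have "\<dots> = 1" using assms by (auto simp: sgn_zero_iff)
  finally have "cos S = 1" by (metis cis.sel(1) one_complex.sel(1))
  then obtain n :: int where n: "S = n * 2 * pi" by (auto simp: cos_one_2pi_int)
  have "0 \<le> S" "S < 3 * (2 * pi)"
    using ccw_ang_bounds[of Q A B] ccw_ang_bounds[of Q B C] ccw_ang_bounds[of Q C A]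
    by (auto simp: S_def)
  with n have "0 \<le> n" "n < 3"
    using pi_gt_zero by (simp_all add: zero_le_mult_iff mult_less_cancel_right_pos)
  hence "n = 0 \<or> n = 1 \<or> n = 2" by auto
  with n show ?thesis by (auto simp: S_def)
qed

lemma ccw_ang_reversed_sum:
  assumes "Q \<notin> {A, B, C}"
    and "ccw_ang Q A B + ccw_ang Q B C + ccw_ang Q C A \<noteq> 2 * pi"
  shows "ccw_ang Q A C + ccw_ang Q C B + ccw_ang Q B A = 2 * pi
       \<or> ccw_ang Q A C = 0 \<and> ccw_ang Q C B = 0 \<and> ccw_ang Q B A = 0"
  unfolding ccw_ang_commute[of Q A C] ccw_ang_commute[of Q C B] ccw_ang_commute[of Q B A]
  using ccw_ang_sum_cases[OF assms(1)] assms(2)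
    ccw_ang_bounds[of Q A B] ccw_ang_bounds[of Q B C] ccw_ang_bounds[of Q C A]
  by auto

lemma ang_eq_ccw_ang_if_two_smallest:
  assumes "ccw_ang Q X Y + ccw_ang Q Y Z + ccw_ang Q Z X = 2 * pi"
    and "ccw_ang Q X Y = x" "ccw_ang Q Y Z = x" "x < ccw_ang Q Z X"
  shows "ang X Q Y = x \<and> ang Y Q Z = x \<and> x < ang Z Q X \<and> 0 < x \<and> x < pi"
  using assms ccw_ang_bounds[of Q Z X] by (auto simp: ang_eq_min_ccw_ang min_def)

lemma ccw_ang_exactly_two_smallestE:
  assumes "ccw_ang Q X Y + ccw_ang Q Y Z + ccw_ang Q Z X = 2 * pi"
    and "exactly_two_smallest (ccw_ang Q X Y, ccw_ang Q Y Z, ccw_ang Q Z X)"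
  obtains X' Y' Z' x where "(X', Y', Z') \<in> {(X, Y, Z), (Y, Z, X), (Z, X, Y)}"
    and "ang X' Q Y' = x" "ang Y' Q Z' = x" "x < ang Z' Q X'" "0 < x" "x < pi"
proof -
  have rotated: "ccw_ang Q Y Z + ccw_ang Q Z X + ccw_ang Q X Y = 2 * pi"
    "ccw_ang Q Z X + ccw_ang Q X Y + ccw_ang Q Y Z = 2 * pi"
    using assms(1) by linarith+
  from assms(2) consider "ccw_ang Q X Y = ccw_ang Q Y Z" "ccw_ang Q Y Z < ccw_ang Q Z X"
    | "ccw_ang Q Y Z = ccw_ang Q Z X" "ccw_ang Q Z X < ccw_ang Q X Y"
    | "ccw_ang Q Z X = ccw_ang Q X Y" "ccw_ang Q X Y < ccw_ang Q Y Z"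
    unfolding exactly_two_smallest_def by auto
  then show thesis
  proof cases
    case 1
    then show thesis using ang_eq_ccw_ang_if_two_smallest[OF assms(1)] that[of X Y Z] by auto
  next
    case 2
    then show thesis using ang_eq_ccw_ang_if_two_smallest[OF rotated(1)] that[of Y Z X] by auto
  next
    case 3
    then show thesis using ang_eq_ccw_ang_if_two_smallest[OF rotated(2)] that[of Z X Y] by auto
  qed
qed

lemma min_angle_rotate: "min_angle Q B C A = min_angle Q A B C"
  by (simp add: min_angle_def ac_simps)

lemma min_angle_swap: "min_angle Q A C B = min_angle Q A B C"
  by (simp add: min_angle_def ang_commute[of A Q C] ang_commute[of C Q B] ang_commute[of B Q A]
      ac_simps)

lemma consec_angles_exactly_two_smallestE:
  assumes "Q \<notin> {A, B, C}" and "exactly_two_smallest (consec_angles Q A B C)"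
  obtains X Y Z x where "\<And>Q'. min_angle Q' X Y Z = min_angle Q' A B C"
    and "Q \<notin> {X, Y, Z}" "ang X Q Y = x" "ang Y Q Z = x" "x < ang Z Q X" "0 < x" "x < pi"
proof (cases "ccw_ang Q A B + ccw_ang Q B C + ccw_ang Q C A = 2 * pi")
  case True
  with assms(2) have "exactly_two_smallest (ccw_ang Q A B, ccw_ang Q B C, ccw_ang Q C A)"
    by (simp add: consec_angles_def)
  then obtain X Y Z x where XYZ: "(X, Y, Z) \<in> {(A, B, C), (B, C, A), (C, A, B)}"
    and "ang X Q Y = x" "ang Y Q Z = x" "x < ang Z Q X" "0 < x" "x < pi"
    using ccw_ang_exactly_two_smallestE[OF True] by blast
  moreover from XYZ have "min_angle Q' X Y Z = min_angle Q' A B C" for Q'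
    using min_angle_rotate by auto
  ultimately show ?thesis using assms(1) XYZ by (intro that[of X Y Z x]) auto
next
  case False
  with assms(2) have two: "exactly_two_smallest (ccw_ang Q A C, ccw_ang Q C B, ccw_ang Q B A)"
    by (simp add: consec_angles_def)
  with ccw_ang_reversed_sum[OF assms(1) False]
  have "ccw_ang Q A C + ccw_ang Q C B + ccw_ang Q B A = 2 * pi"
    by (auto simp: exactly_two_smallest_def)
  then obtain X Y Z x where XYZ: "(X, Y, Z) \<in> {(A, C, B), (C, B, A), (B, A, C)}"
    and "ang X Q Y = x" "ang Y Q Z = x" "x < ang Z Q X" "0 < x" "x < pi"
    using ccw_ang_exactly_two_smallestE[OF _ two] by blast
  moreover from XYZ have "min_angle Q' X Y Z = min_angle Q' A B C" for Q'
    by (auto; metis min_angle_rotate min_angle_swap)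
  ultimately show ?thesis using assms(1) XYZ by (intro that[of X Y Z x]) auto
qed

lemma divide_sqrt_eq_sin_arctan:
  fixes q s :: real
  assumes "q \<noteq> 0"
  shows "s / sqrt (s\<^sup>2 + q\<^sup>2) = sin (arctan (s / \<bar>q\<bar>))"
proof -
  have "sqrt (s\<^sup>2 + q\<^sup>2) = sqrt (q\<^sup>2 * (1 + (s / \<bar>q\<bar>)\<^sup>2))"
    using assms by (simp add: field_simps)
  also have "\<dots> = \<bar>q\<bar> * sqrt (1 + (s / \<bar>q\<bar>)\<^sup>2)"
    by (simp add: real_sqrt_mult)
  finally show ?thesis using assms by (simp add: sin_arctan)
qed

lemma divide_sqrt_strict_mono:
  fixes q s1 s2 :: real
  assumes "q \<noteq> 0" "s1 < s2"
  shows "s1 / sqrt (s1\<^sup>2 + q\<^sup>2) < s2 / sqrt (s2\<^sup>2 + q\<^sup>2)"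
  using assms arctan_bounded[of "s1 / \<bar>q\<bar>"] arctan_bounded[of "s2 / \<bar>q\<bar>"]
  by (simp add: divide_sqrt_eq_sin_arctan sin_mono_less_eq arctan_less_iff divide_strict_right_mono)

lemma cos_Arg_diff_of_real_less:
  assumes "Im w \<noteq> 0" "0 < t"
  shows "cos (Arg (w - of_real t)) < cos (Arg w)"
proof -
  have "w \<noteq> 0" "w - of_real t \<noteq> 0" using assms(1) by (auto simp: complex_eq_iff)
  then show ?thesis
    using divide_sqrt_strict_mono[OF assms(1), of "Re w - t" "Re w"] assms(2)
    by (simp add: cos_Arg cmod_def)
qed

lemma cos_Arg_inverse: "cos (Arg (inverse z)) = cos (Arg z)"
  by (simp add: Arg_inverse)

lemma ang_bounds: "0 \<le> ang X Q Y" "ang X Q Y \<le> pi"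
  using Arg_bounded[of "(Y - Q) / (X - Q)"] by (auto simp: ang_def)

lemma cos_ang: "cos (ang X Q Y) = cos (Arg ((Y - Q) / (X - Q)))"
  by (simp add: ang_def)

lemma less_ang_iff_cos_less: "0 \<le> x \<Longrightarrow> x \<le> pi \<Longrightarrow> x < ang X Q Y \<longleftrightarrow> cos (ang X Q Y) < cos x"
  using ang_bounds[of X Q Y] by (simp add: cos_mono_less_eq)

lemma ang_less_ang_moved_toward:
  assumes "Q \<noteq> X" "Q \<noteq> Y" "0 < ang X Q Y" "ang X Q Y < pi" "0 < t" "t < 1"
  shows "ang X Q Y < ang X (Q + of_real t * (Y - Q)) Y"
proof -
  define w where "w = (X - Q) / (Y - Q)"
  define Q' where "Q' = Q + of_real t * (Y - Q)"
  have w_inverse: "(Y - Q) / (X - Q) = inverse w" by (simp add: w_def)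
  have "inverse w \<notin> \<real>"
    using assms(3,4) Arg_eq_0_pi[of "inverse w"] by (auto simp: ang_def w_inverse)
  hence Im_w: "Im w \<noteq> 0" by (metis Reals_inverse complex_is_Real_iff inverse_inverse_eq)
  hence "w \<noteq> of_real t" by (metis Im_complex_of_real)
  hence "(Y - Q') / (X - Q') = inverse (w - of_real t) * of_real (1 - t)"
    using assms(2) by (simp add: Q'_def w_def field_simps)
  hence "Arg ((Y - Q') / (X - Q')) = Arg (inverse (w - of_real t))"
    using assms(6) by (simp only: Arg_times_of_real2 diff_gt_0_iff_gt)
  hence "cos (ang X Q' Y) = cos (Arg (w - of_real t))"
    by (simp add: cos_ang cos_Arg_inverse)
  also have "\<dots> < cos (Arg w)" using cos_Arg_diff_of_real_less[OF Im_w assms(5)] .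
  also have "\<dots> = cos (ang X Q Y)" by (simp add: cos_ang w_inverse cos_Arg_inverse)
  finally show ?thesis
    using assms(3,4) less_ang_iff_cos_less[of "ang X Q Y" X Q' Y] by (simp add: Q'_def)
qed

lemma eventually_less_ang_nhds:
  assumes "Q \<noteq> X" "Q \<noteq> Y" "0 \<le> x" "x < ang X Q Y"
  shows "\<forall>\<^sub>F Q' in nhds Q. x < ang X Q' Y"
proof -
  have "x \<le> pi" using assms(4) ang_bounds[of X Q Y] by simp
  \<comment> \<open>Arg jumps across the negative real axis, but its cosine is continuous away from 0.\<close>
  define f where "f Q' = Re ((Y - Q') / (X - Q')) / cmod ((Y - Q') / (X - Q'))" for Q'
  have cos_ang_f: "Q' \<noteq> X \<Longrightarrow> Q' \<noteq> Y \<Longrightarrow> cos (ang X Q' Y) = f Q'" for Q'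
    by (simp add: f_def cos_ang cos_Arg)
  have "isCont f Q" unfolding f_def using assms(1,2) by (intro continuous_intros) auto
  moreover have "f Q < cos x"
    using assms less_ang_iff_cos_less[OF assms(3) \<open>x \<le> pi\<close>] cos_ang_f[of Q] by simp
  ultimately have "\<forall>\<^sub>F Q' in at Q. f Q' < cos x"
    unfolding isCont_def by (rule order_tendstoD(2))
  moreover have "\<forall>\<^sub>F Q' in at Q. Q' \<noteq> X" "\<forall>\<^sub>F Q' in at Q. Q' \<noteq> Y"
    using assms(1,2) t1_space_nhds eventually_nhds_conv_at by blast+
  ultimately have "\<forall>\<^sub>F Q' in at Q. x < ang X Q' Y"
    by eventually_elim (use assms(3) \<open>x \<le> pi\<close> cos_ang_f in \<open>simp add: less_ang_iff_cos_less\<close>)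
  with assms(4) show ?thesis by (simp add: eventually_nhds_conv_at)
qed

lemma larger_angles_nearby:
  assumes "Q \<notin> {X, Y, Z}" "ang X Q Y = x" "ang Y Q Z = x" "x < ang Z Q X" "0 < x" "x < pi"
    and "0 < e"
  obtains Q' where "dist Q Q' < e" "x < ang X Q' Y" "x < ang Y Q' Z" "x < ang Z Q' X"
proof -
  define p where "p t = Q + of_real t * (Y - Q)" for t
  have p_tendsto: "(p \<longlongrightarrow> Q) (at_right 0)"
    unfolding p_def by (auto intro!: tendsto_eq_intros)
  have "\<forall>\<^sub>F t in at_right 0. x < ang Z (p t) X"
    using eventually_compose_filterlim[OF eventually_less_ang_nhds p_tendsto] assms by auto
  moreover have "\<forall>\<^sub>F t in at_right 0. dist (p t) Q < e"
    using p_tendsto assms(7) tendsto_iff by blast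
  moreover have "\<forall>\<^sub>F t in at_right (0::real). 0 < t \<and> t < 1"
    by (auto simp: eventually_at_right_field intro: exI[of _ 1])
  ultimately have "\<forall>\<^sub>F t in at_right 0. x < ang Z (p t) X \<and> dist (p t) Q < e \<and> 0 < t \<and> t < 1"
    by eventually_elim blast
  then obtain t where t: "x < ang Z (p t) X" "dist (p t) Q < e" "0 < t" "t < 1"
    using eventually_happens'[of "at_right (0::real)"] by auto
  have "x < ang X (p t) Y"
    using ang_less_ang_moved_toward[of Q X Y t] assms t by (simp add: p_def)
  moreover have "x < ang Y (p t) Z"
    using ang_less_ang_moved_toward[of Q Z Y t] assms t by (simp add: p_def ang_commute[of Y _ Z])
  ultimately show thesis using that t by (simp add: dist_commute)
qed

theorem lemma1:
  fixes P A B C Pstar :: complex and r :: real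
  assumes "r > 0"
    and "dist P Pstar \<le> r"
    and "\<forall>Q. dist P Q \<le> r \<longrightarrow> min_angle Q A B C \<le> min_angle Pstar A B C"
    and "Pstar \<notin> {A, B, C}"
    and "exactly_two_smallest (consec_angles Pstar A B C)"
  shows "dist P Pstar = r"
proof (rule ccontr)
  assume "dist P Pstar \<noteq> r"
  with assms(2) have "0 < r - dist P Pstar" by simp
  obtain X Y Z x where same: "\<And>Q. min_angle Q X Y Z = min_angle Q A B C"
    and config: "Pstar \<notin> {X, Y, Z}" "ang X Pstar Y = x" "ang Y Pstar Z = x"
      "x < ang Z Pstar X" "0 < x" "x < pi"
    using consec_angles_exactly_two_smallestE[OF assms(4,5)] by blast
  obtain Q where Q: "dist Pstar Q < r - dist P Pstar"
    "x < ang X Q Y" "x < ang Y Q Z" "x < ang Z Q X"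
    using larger_angles_nearby[OF config \<open>0 < r - dist P Pstar\<close>] by blast
  have "dist P Q \<le> r" using Q(1) dist_triangle[of P Q Pstar] by simp
  moreover have "min_angle Pstar X Y Z = x" using config by (simp add: min_angle_def)
  moreover have "x < min_angle Q X Y Z" using Q(2-4) by (simp add: min_angle_def)
  ultimately show False using assms(3) same by fastforce
qed

end
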